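(* Let $\Phi=B_n$ or $C_n$ (standard realization), let $\mu\in\mathfrak h^*$ be an integral anti-dominant weight, $J=\{\alpha\in\Delta:\langle\mu,\alpha^\vee\rangle=0\}$, $W^J$ the set of $w\in W$ with $\ell(ws_\alpha)=\ell(w)+1$ for all $\alpha\in J$. If $w\in W^J$ and $\lambda=w\mu$, then $p(\lambda^-)=p({}^-\vec w)$.
   Context: $\mathfrak h^*=\mathbb C^n$ with basis $\varepsilon_i$, simple roots $\varepsilon_i-\varepsilon_{i+1}$ ($i<n$) and $\varepsilon_n$ (type $B$) or $2\varepsilon_n$ (type $C$). $W$ is identified with $W_n$ (signed permutations $w$ of $\{\pm1,\dots,\pm n\}$, $w(-i)=-w(i)$) via $s_{\varepsilon_i-\varepsilon_{i+1}}\mapsto s_{n-i}$ and $s_{\alpha_n}\mapsto t$; equivalently $w(\varepsilon_{n+1-k})=\operatorname{sgn}(w(k))\,\varepsilon_{n+1-|w(k)|}$. Anti-dominant: $\langle\mu,\alpha^\vee\rangle\notin\mathbb Z_{>0}$ for $\alpha\in\Phi^+$. $\lambda^-=(\lambda_1,\dots,\lambda_n,-\lambda_n,\dots,-\lambda_1)$, ${}^-\vec w=(-w(n),\dots,-w(1),w(1),\dots,w(n))$, and $p(x)$ is the shape of the Robinson–Schensted tableau of $x$ (row insertion, bumping the leftmost entry strictly greater). *)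

theory Defs
  imports Complex_Main
begin

datatype rtype = TypeB | TypeC

text \<open>Vectors of h* = C^n are functions nat => complex; only coordinates 1..n matter.\<close>

definition evec :: "nat \<Rightarrow> nat \<Rightarrow> complex" where
  "evec i = (\<lambda>k. if k = i then 1 else 0)"

definition pos_roots :: "rtype \<Rightarrow> nat \<Rightarrow> (nat \<Rightarrow> complex) set" where
  "pos_roots T n =
     {(\<lambda>k. evec i k - evec j k) | i j. 1 \<le> i \<and> i < j \<and> j \<le> n}
   \<union> {(\<lambda>k. evec i k + evec j k) | i j. 1 \<le> i \<and> i < j \<and> j \<le> n}
   \<union> {(\<lambda>k. (if T = TypeB then 1 else 2) * evec i k) | i. 1 \<le> i \<and> i \<le> n}"

definition simple_root :: "rtype \<Rightarrow> nat \<Rightarrow> nat \<Rightarrow> nat \<Rightarrow> complex" where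
  "simple_root T n i =
     (if i < n then (\<lambda>k. evec i k - evec (i+1) k)
      else (\<lambda>k. (if T = TypeB then 1 else 2) * evec n k))"

definition coroot :: "nat \<Rightarrow> (nat \<Rightarrow> complex) \<Rightarrow> nat \<Rightarrow> complex" where
  "coroot n \<alpha> = (\<lambda>k. 2 * \<alpha> k / (\<Sum>j=1..n. \<alpha> j * \<alpha> j))"

definition pairing :: "nat \<Rightarrow> (nat \<Rightarrow> complex) \<Rightarrow> (nat \<Rightarrow> complex) \<Rightarrow> complex" where
  "pairing n \<mu> \<alpha> = (\<Sum>k=1..n. \<mu> k * coroot n \<alpha> k)"

text \<open>Integral: pairing with every coroot is an integer (checking positive roots suffices,
  since negative roots give the negated value).\<close>
definition integral_weight :: "rtype \<Rightarrow> nat \<Rightarrow> (nat \<Rightarrow> complex) \<Rightarrow> bool" where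
  "integral_weight T n \<mu> = (\<forall>\<alpha>\<in>pos_roots T n. pairing n \<mu> \<alpha> \<in> \<int>)"

definition anti_dominant :: "rtype \<Rightarrow> nat \<Rightarrow> (nat \<Rightarrow> complex) \<Rightarrow> bool" where
  "anti_dominant T n \<mu> =
     (\<forall>\<alpha>\<in>pos_roots T n. \<not> (\<exists>m::int. m > 0 \<and> pairing n \<mu> \<alpha> = of_int m))"

definition signed_perm :: "nat \<Rightarrow> (int \<Rightarrow> int) \<Rightarrow> bool" where
  "signed_perm n w =
     (bij_betw w {x. 1 \<le> \<bar>x\<bar> \<and> \<bar>x\<bar> \<le> int n} {x. 1 \<le> \<bar>x\<bar> \<and> \<bar>x\<bar> \<le> int n}
      \<and> (\<forall>x. w (-x) = - w x)
      \<and> (\<forall>x. \<not> (1 \<le> \<bar>x\<bar> \<and> \<bar>x\<bar> \<le> int n) \<longrightarrow> w x = x))"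

definition sgen :: "int \<Rightarrow> int \<Rightarrow> int" where
  "sgen i = (\<lambda>x. if x = i then i + 1 else if x = i + 1 then i
               else if x = -i then -(i+1) else if x = -(i+1) then -i else x)"

definition tgen :: "int \<Rightarrow> int" where
  "tgen = (\<lambda>x. if x = 1 then -1 else if x = -1 then 1 else x)"

definition generators :: "nat \<Rightarrow> (int \<Rightarrow> int) set" where
  "generators n = {sgen (int i) | i. 1 \<le> i \<and> i < n} \<union> {tgen}"

definition cox_length :: "nat \<Rightarrow> (int \<Rightarrow> int) \<Rightarrow> nat" where
  "cox_length n w =
     (LEAST m. \<exists>ws. length ws = m \<and> set ws \<subseteq> generators n \<and> foldr (\<circ>) ws id = w)"

text \<open>Identification of simple reflections: s_{e_i - e_{i+1}} -> s_{n-i}, s_{alpha_n} -> t.\<close>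
definition simple_refl :: "nat \<Rightarrow> nat \<Rightarrow> int \<Rightarrow> int" where
  "simple_refl n i = (if i < n then sgen (int (n - i)) else tgen)"

definition WJ :: "rtype \<Rightarrow> nat \<Rightarrow> (nat \<Rightarrow> complex) \<Rightarrow> (int \<Rightarrow> int) set" where
  "WJ T n \<mu> = {w. signed_perm n w \<and>
     (\<forall>i\<in>{1..n}. pairing n \<mu> (simple_root T n i) = 0 \<longrightarrow>
        cox_length n (w \<circ> simple_refl n i) = cox_length n w + 1)}"

text \<open>Action on h*: w(e_{n+1-k}) = sgn(w(k)) e_{n+1-|w(k)|}, extended linearly.\<close>
definition weyl_act :: "nat \<Rightarrow> (int \<Rightarrow> int) \<Rightarrow> (nat \<Rightarrow> complex) \<Rightarrow> nat \<Rightarrow> complex" where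
  "weyl_act n w \<mu> = (\<lambda>j. \<Sum>k=1..n.
      (if int n + 1 - \<bar>w (int k)\<bar> = int j
       then of_int (sgn (w (int k))) * \<mu> (n + 1 - k) else 0))"

definition lam_minus :: "nat \<Rightarrow> (nat \<Rightarrow> complex) \<Rightarrow> complex list" where
  "lam_minus n lam = map lam [1..<n+1] @ map (\<lambda>i. - lam i) (rev [1..<n+1])"

definition minus_vec :: "nat \<Rightarrow> (int \<Rightarrow> int) \<Rightarrow> int list" where
  "minus_vec n w = map (\<lambda>k. - w (int k)) (rev [1..<n+1]) @ map (\<lambda>k. w (int k)) [1..<n+1]"

fun row_ins :: "'a::linorder \<Rightarrow> 'a list \<Rightarrow> 'a list \<times> 'a option" where
  "row_ins x [] = ([x], None)"
| "row_ins x (y # ys) =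
     (if x < y then (x # ys, Some y)
      else (case row_ins x ys of (r, b) \<Rightarrow> (y # r, b)))"

fun tab_ins :: "'a::linorder \<Rightarrow> 'a list list \<Rightarrow> 'a list list" where
  "tab_ins x [] = [[x]]"
| "tab_ins x (r # rs) =
     (case row_ins x r of
        (r', None) \<Rightarrow> r' # rs
      | (r', Some y) \<Rightarrow> r' # tab_ins y rs)"

definition rs_tableau :: "'a::linorder list \<Rightarrow> 'a list list" where
  "rs_tableau xs = foldl (\<lambda>T x. tab_ins x T) [] xs"

definition rs_shape :: "'a::linorder list \<Rightarrow> nat list" where
  "rs_shape xs = map length (rs_tableau xs)"

end

theory Submission
  imports Defs "HOL-Library.Multiset" "HOL-Combinatorics.Transposition"
begin

text \<open>Let \<open>c(y)\<close>, \<open>y = -n, \<dots>, -1, 1, \<dots>, n\<close>, be the real parts of the entries of \<open>\<mu>\<^sup>-\<close>.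
  Then \<open>\<lambda>\<^sup>-\<close> is the word \<open>c \<circ> w\<^sup>-\<^sup>1\<close> and \<open>\<^sup>-w\<close> the word \<open>w\<close>, both read along the chain
  \<open>-n < \<dots> < -1 < 1 < \<dots> < n\<close>. Anti-dominance makes \<open>c\<close> weakly increasing, and a flat step
  of \<open>c\<close> is a simple root in \<open>J\<close>, hence an ascent of \<open>w \<in> W\<^sup>J\<close>; ascents are read off from the
  length formula \<open>2 \<ell>(w) = inv(w) + neg(w)\<close>. So \<open>w\<close> increases on every block where \<open>c\<close> is
  constant, which means that \<open>c \<circ> w\<^sup>-\<^sup>1\<close> standardizes to the permutation \<open>w\<^sup>-\<^sup>1\<close>. Standardization
  preserves the Robinson-Schensted shape, and by Fomin's growth diagrams a permutation and its
  inverse have the same shape.\<close>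

section \<open>Row insertion\<close>

lemma row_ins_no_bump_iff: "snd (row_ins x r) = None \<longleftrightarrow> (\<forall>y\<in>set r. \<not> x < y)"
  by (induction r) (auto split: prod.splits)

lemma row_ins_no_bump: "\<forall>y\<in>set r. \<not> x < y \<Longrightarrow> row_ins x r = (r @ [x], None)"
  by (induction r) auto

lemma row_ins_bump:
  "snd (row_ins x r) = Some y \<Longrightarrow> y \<in> set r \<and> x < y \<and> length (fst (row_ins x r)) = length r"
  by (induction r) (auto split: prod.splits if_splits)

lemma row_ins_mset:
  "row_ins x r = (r', b) \<Longrightarrow> mset r' + mset_set (set_option b) = add_mset x (mset r)"
  by (induction r arbitrary: r' b) (auto split: prod.splits if_splits)

lemma tab_ins_mset: "mset (concat (tab_ins x T)) = add_mset x (mset (concat T))"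
proof (induction T arbitrary: x)
  case (Cons r rs)
  obtain r' b where rb: "row_ins x r = (r', b)" by fastforce
  show ?case
    using row_ins_mset[OF rb] rb Cons.IH by (cases b) (auto simp: algebra_simps)
qed simp

lemma rs_tableau_snoc: "rs_tableau (xs @ [x]) = tab_ins x (rs_tableau xs)"
  by (simp add: rs_tableau_def)

lemma rs_tableau_Nil [simp]: "rs_tableau [] = []"
  by (simp add: rs_tableau_def)

lemma mset_rs_tableau: "mset (concat (rs_tableau xs)) = mset xs"
  by (induction xs rule: rev_induct) (simp_all add: rs_tableau_snoc tab_ins_mset)

lemma set_rs_tableau: "set (concat (rs_tableau xs)) = set xs"
  by (metis mset_rs_tableau set_mset_mset)

lemma distinct_rs_tableau: "distinct xs \<Longrightarrow> distinct (concat (rs_tableau xs))"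
  by (metis mset_eq_imp_distinct_iff mset_rs_tableau)

fun add_box :: "nat \<Rightarrow> nat list \<Rightarrow> nat list" where
  "add_box 0 [] = [1]"
| "add_box 0 (a # s) = Suc a # s"
| "add_box (Suc k) [] = [1]"
| "add_box (Suc k) (a # s) = a # add_box k s"

fun add_entry :: "'a \<Rightarrow> nat \<Rightarrow> 'a list list \<Rightarrow> 'a list list" where
  "add_entry m 0 [] = [[m]]"
| "add_entry m 0 (t # ts) = (t @ [m]) # ts"
| "add_entry m (Suc r) [] = [[m]]"
| "add_entry m (Suc r) (t # ts) = t # add_entry m r ts"

fun insertion_row :: "'a::linorder \<Rightarrow> 'a list list \<Rightarrow> nat" where
  "insertion_row x [] = 0"
| "insertion_row x (r # rs) =
     (case snd (row_ins x r) of None \<Rightarrow> 0 | Some y \<Rightarrow> Suc (insertion_row y rs))"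

lemma insertion_row_le: "insertion_row x T \<le> length T"
  by (induction T arbitrary: x) (auto split: option.splits)

lemma shape_tab_ins: "map length (tab_ins x T) = add_box (insertion_row x T) (map length T)"
proof (induction T arbitrary: x)
  case (Cons r rs)
  show ?case
  proof (cases "snd (row_ins x r)")
    case None
    then show ?thesis by (simp add: row_ins_no_bump[OF None[unfolded row_ins_no_bump_iff]])
  next
    case (Some y)
    then obtain r' where "row_ins x r = (r', Some y)" by (metis prod.collapse)
    then show ?thesis using row_ins_bump[OF Some] Cons.IH[of y] by simp
  qed
qed simp

lemma length_add_box:
  "k \<le> length s \<Longrightarrow> length (add_box k s) = (if k = length s then Suc (length s) else length s)"
  by (induction k s rule: add_box.induct) auto

lemma length_tab_ins:
  "length (tab_ins x T) = (if insertion_row x T = length T then Suc (length T) else length T)"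
  by (metis shape_tab_ins length_map length_add_box insertion_row_le)

lemma shape_add_entry: "map length (add_entry m r T) = add_box r (map length T)"
  by (induction m r T rule: add_entry.induct) auto

lemma row_ins_snoc_larger:
  "x < m \<Longrightarrow> row_ins x (t @ [m]) =
     (if \<exists>y\<in>set t. x < y then (fst (row_ins x t) @ [m], snd (row_ins x t)) else (t @ [x], Some m))"
  by (induction t) (auto split: prod.splits)

lemma tab_ins_max_entry:
  assumes "\<forall>y\<in>set (concat T). y \<le> m"
  shows "tab_ins m T = add_entry m 0 T"
  using assms by (cases T) (auto simp: row_ins_no_bump not_less)

lemma tab_ins_add_entry:
  "r \<le> length T \<Longrightarrow> x < m \<Longrightarrow> \<forall>y\<in>set (concat T). y < m \<Longrightarrow>
   tab_ins x (add_entry m r T) =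
     add_entry m (if insertion_row x T = r then Suc r else r) (tab_ins x T)"
proof (induction T arbitrary: x r)
  case (Cons t ts)
  show ?case
  proof (cases r)
    case 0
    show ?thesis
    proof (cases "\<exists>y\<in>set t. x < y")
      case True
      then obtain y where y: "snd (row_ins x t) = Some y" using row_ins_no_bump_iff by fastforce
      then obtain t' where "row_ins x t = (t', Some y)" by (metis prod.collapse)
      then show ?thesis using True 0 Cons.prems y by (simp add: row_ins_snoc_larger)
    next
      case False
      have "tab_ins m ts = add_entry m 0 ts"
        using Cons.prems by (intro tab_ins_max_entry) (auto intro: less_imp_le)
      then show ?thesis using False 0 Cons.prems by (simp add: row_ins_snoc_larger row_ins_no_bump)
    qed
  next
    case (Suc r')
    show ?thesis
    proof (cases "snd (row_ins x t)")
      case None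
      then show ?thesis using Suc by (simp add: row_ins_no_bump[OF None[unfolded row_ins_no_bump_iff]])
    next
      case (Some y)
      then obtain t' where e: "row_ins x t = (t', Some y)" by (metis prod.collapse)
      have "y \<in> set t" using row_ins_bump[OF Some] by simp
      then have "tab_ins y (add_entry m r' ts) =
          add_entry m (if insertion_row y ts = r' then Suc r' else r') (tab_ins y ts)"
        using Cons.prems Suc by (intro Cons.IH) auto
      then show ?thesis using Suc by (simp add: e)
    qed
  qed
qed simp

lemma rs_tableau_max_entry:
  fixes u :: "'a::linorder list"
  shows "distinct u \<Longrightarrow> m \<in> set u \<Longrightarrow> \<forall>y\<in>set u. y \<le> m \<Longrightarrow>
    \<exists>r \<le> length (rs_tableau (removeAll m u)).
      rs_tableau u = add_entry m r (rs_tableau (removeAll m u))"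
proof (induction u rule: rev_induct)
  case (snoc a v)
  show ?case
  proof (cases "a = m")
    case True
    then have "removeAll m (v @ [a]) = v" using snoc.prems by simp
    moreover have "rs_tableau (v @ [a]) = add_entry m 0 (rs_tableau v)"
      using True snoc.prems unfolding rs_tableau_snoc True
      by (intro tab_ins_max_entry) (unfold set_rs_tableau, simp)
    ultimately show ?thesis by auto
  next
    case False
    then have am: "a < m" and mv: "m \<in> set v" using snoc.prems by fastforce+
    obtain r where r: "r \<le> length (rs_tableau (removeAll m v))"
      "rs_tableau v = add_entry m r (rs_tableau (removeAll m v))"
      using snoc.IH[OF _ mv] snoc.prems by auto
    have lt: "\<forall>y\<in>set (concat (rs_tableau (removeAll m v))). y < m"
      using snoc.prems unfolding set_rs_tableau by auto
    have rr: "removeAll m (v @ [a]) = removeAll m v @ [a]" using False by simp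
    have "rs_tableau (v @ [a]) = add_entry m (if insertion_row a (rs_tableau (removeAll m v)) = r
        then Suc r else r) (rs_tableau (removeAll m (v @ [a])))"
      unfolding rr rs_tableau_snoc r(2) by (rule tab_ins_add_entry[OF r(1) am lt])
    moreover have "(if insertion_row a (rs_tableau (removeAll m v)) = r then Suc r else r)
        \<le> length (rs_tableau (removeAll m (v @ [a])))"
      using r(1) unfolding rr rs_tableau_snoc length_tab_ins by auto
    ultimately show ?thesis by blast
  qed
qed simp

section \<open>Growth diagrams and the symmetry of RS shapes\<close>

fun shape_sup :: "nat list \<Rightarrow> nat list \<Rightarrow> nat list" where
  "shape_sup [] ys = ys"
| "shape_sup xs [] = xs"
| "shape_sup (x # xs) (y # ys) = max x y # shape_sup xs ys"

lemma shape_sup_idem: "shape_sup xs xs = xs"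
  by (induction xs) simp_all

lemma shape_sup_commute: "shape_sup xs ys = shape_sup ys xs"
proof (induction xs arbitrary: ys)
  case Nil
  then show ?case by (cases ys) auto
next
  case (Cons a xs)
  then show ?case by (cases ys) (auto simp: max.commute)
qed

lemma shape_sup_add_box: "shape_sup s (add_box k s) = add_box k s"
  by (induction k s rule: add_box.induct) (auto simp: shape_sup_idem)

lemma shape_sup_add_box_add_box:
  "r \<noteq> k \<Longrightarrow> r \<le> length s \<Longrightarrow> k \<le> length s \<Longrightarrow>
   shape_sup (add_box r s) (add_box k s) = add_box r (add_box k s)"
proof (induction s arbitrary: r k)
  case (Cons a s)
  show ?case
  proof (cases r)
    case 0
    then obtain k' where "k = Suc k'" using Cons by (cases k) auto
    then show ?thesis using 0 shape_sup_add_box[of s k'] shape_sup_commute by simp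
  next
    case (Suc r')
    show ?thesis
    proof (cases k)
      case 0
      then show ?thesis using Suc shape_sup_add_box[of s r'] shape_sup_commute by simp
    next
      case (Suc k')
      then show ?thesis using \<open>r = Suc r'\<close> Cons by simp
    qed
  qed
qed auto

lemma add_box_inject: "k \<le> length s \<Longrightarrow> r \<le> length s \<Longrightarrow> add_box k s = add_box r s \<Longrightarrow> k = r"
proof (induction s arbitrary: r k)
  case (Cons a s)
  then show ?case by (cases k; cases r) auto
qed simp

lemma add_box_neq: "add_box k s \<noteq> s"
  by (induction k s rule: add_box.induct) auto

definition added_row :: "nat list \<Rightarrow> nat list \<Rightarrow> nat" where
  "added_row \<rho> \<mu> = (THE r. r \<le> length \<rho> \<and> \<mu> = add_box r \<rho>)"

lemma added_row_add_box: "r \<le> length \<rho> \<Longrightarrow> added_row \<rho> (add_box r \<rho>) = r"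
  unfolding added_row_def by (rule the_equality) (auto dest: add_box_inject)

text \<open>Fomin's local rule for the growth diagram of RS insertion: from the shapes \<open>\<rho>\<close>, \<open>\<mu>\<close>,
  \<open>\<nu>\<close> at the corners \<open>(i, j)\<close>, \<open>(i, j + 1)\<close>, \<open>(i + 1, j)\<close> of a cell, and whether the cell is
  marked, it computes the shape at \<open>(i + 1, j + 1)\<close>.\<close>
definition growth_rule :: "nat list \<Rightarrow> nat list \<Rightarrow> nat list \<Rightarrow> bool \<Rightarrow> nat list" where
  "growth_rule \<rho> \<mu> \<nu> x =
     (if x then add_box 0 \<rho>
      else if \<mu> = \<nu> \<and> \<mu> \<noteq> \<rho> then add_box (Suc (added_row \<rho> \<mu>)) \<mu>
      else shape_sup \<mu> \<nu>)"

lemma growth_rule_commute: "growth_rule \<rho> \<mu> \<nu> x = growth_rule \<rho> \<nu> \<mu> x"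
  unfolding growth_rule_def using shape_sup_commute by auto

definition below_shape :: "nat list \<Rightarrow> nat \<Rightarrow> nat list" where
  "below_shape l j = rs_shape (filter (\<lambda>v. v < j) l)"

lemma below_shape_eq: "below_shape l j = map length (rs_tableau (filter (\<lambda>v. v < j) l))"
  unfolding below_shape_def rs_shape_def ..

lemma rs_tableau_filter_less_Suc:
  assumes "distinct l" "j \<in> set l"
  obtains r where "r \<le> length (rs_tableau (filter (\<lambda>v. v < j) l))"
    "rs_tableau (filter (\<lambda>v. v < Suc j) l) = add_entry j r (rs_tableau (filter (\<lambda>v. v < j) l))"
proof -
  have "removeAll j (filter (\<lambda>v. v < Suc j) l) = filter (\<lambda>v. v < j) l"
    by (induction l) auto
  moreover have "\<exists>r \<le> length (rs_tableau (removeAll j (filter (\<lambda>v. v < Suc j) l))).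
     rs_tableau (filter (\<lambda>v. v < Suc j) l) =
       add_entry j r (rs_tableau (removeAll j (filter (\<lambda>v. v < Suc j) l)))"
    using assms by (intro rs_tableau_max_entry) auto
  ultimately show ?thesis using that by auto
qed

lemma filter_less_Suc_notin: "j \<notin> set l \<Longrightarrow> filter (\<lambda>v. v < Suc j) l = filter (\<lambda>v. v < j) l"
  by (induction l) auto

lemma below_shape_Suc_notin: "j \<notin> set l \<Longrightarrow> below_shape l (Suc j) = below_shape l j"
  unfolding below_shape_def by (simp add: filter_less_Suc_notin)

lemma below_shape_Suc_in:
  assumes "distinct l" "j \<in> set l"
  obtains r where "r \<le> length (below_shape l j)" "below_shape l (Suc j) = add_box r (below_shape l j)"
  using rs_tableau_filter_less_Suc[OF assms] unfolding below_shape_eq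
  by (metis length_map shape_add_entry)

lemma below_shape_snoc_above: "j \<le> a \<Longrightarrow> below_shape (l @ [a]) j = below_shape l j"
  unfolding below_shape_def by simp

lemma growth_rule_snoc_above:
  assumes "distinct l" "j < a"
  shows "below_shape (l @ [a]) (Suc j) =
    growth_rule (below_shape l j) (below_shape l (Suc j)) (below_shape (l @ [a]) j) False"
proof -
  have "shape_sup (below_shape l (Suc j)) (below_shape l j) = below_shape l (Suc j)"
    by (cases "j \<in> set l")
      (auto elim: below_shape_Suc_in[OF assms(1)]
        simp: shape_sup_add_box shape_sup_commute below_shape_Suc_notin shape_sup_idem)
  then show ?thesis using assms(2) by (simp add: growth_rule_def below_shape_snoc_above)
qed

lemma growth_rule_snoc_eq:
  assumes "distinct (l @ [j])"
  shows "below_shape (l @ [j]) (Suc j) = add_box 0 (below_shape l j)"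
proof -
  have "\<forall>y\<in>set (concat (rs_tableau (filter (\<lambda>v. v < j) l))). y \<le> j"
    unfolding set_rs_tableau by auto
  then show ?thesis
    using assms unfolding below_shape_eq
    by (simp add: rs_tableau_snoc filter_less_Suc_notin tab_ins_max_entry shape_add_entry)
qed

lemma growth_rule_snoc_below:
  assumes dl: "distinct (l @ [a])" and aj: "a < j"
  shows "below_shape (l @ [a]) (Suc j) =
    growth_rule (below_shape l j) (below_shape l (Suc j)) (below_shape (l @ [a]) j) False"
proof -
  define P where "P = rs_tableau (filter (\<lambda>v. v < j) l)"
  define k where "k = insertion_row a P"
  have \<rho>: "below_shape l j = map length P" unfolding P_def below_shape_eq ..
  have k: "k \<le> length (below_shape l j)" unfolding k_def \<rho> using insertion_row_le by simp
  have \<nu>: "below_shape (l @ [a]) j = add_box k (below_shape l j)"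
    unfolding below_shape_eq using aj
    by (simp add: rs_tableau_snoc P_def[symmetric] shape_tab_ins k_def)
  show ?thesis
  proof (cases "j \<in> set l")
    case False
    then have "below_shape l (Suc j) = below_shape l j"
      "below_shape (l @ [a]) (Suc j) = below_shape (l @ [a]) j"
      using aj by (simp_all add: below_shape_Suc_notin)
    then show ?thesis using add_box_neq shape_sup_add_box unfolding growth_rule_def \<nu> by auto
  next
    case True
    then obtain r where r: "r \<le> length P"
      "rs_tableau (filter (\<lambda>v. v < Suc j) l) = add_entry j r P"
      using rs_tableau_filter_less_Suc[of l j] dl unfolding P_def by auto
    have rl: "r \<le> length (below_shape l j)" using r(1) \<rho> by simp
    have \<mu>: "below_shape l (Suc j) = add_box r (below_shape l j)"
      unfolding below_shape_eq r(2) shape_add_entry P_def ..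
    have below_j: "\<forall>y\<in>set (concat P). y < j" unfolding P_def set_rs_tableau by auto
    have "below_shape (l @ [a]) (Suc j) = map length (tab_ins a (add_entry j r P))"
      unfolding below_shape_eq using aj r(2) by (simp add: rs_tableau_snoc)
    also have "\<dots> = add_box (if k = r then Suc r else r) (add_box k (below_shape l j))"
      unfolding tab_ins_add_entry[OF r(1) aj below_j] shape_add_entry shape_tab_ins k_def \<rho> ..
    finally have \<lambda>: "below_shape (l @ [a]) (Suc j) =
        add_box (if k = r then Suc r else r) (add_box k (below_shape l j))" .
    show ?thesis
    proof (cases "k = r")
      case True
      then show ?thesis
        using add_box_neq added_row_add_box[OF rl] unfolding growth_rule_def \<lambda> \<mu> \<nu> by auto
    next
      case False
      then have "add_box r (below_shape l j) \<noteq> add_box k (below_shape l j)"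
        using add_box_inject[OF k rl] by metis
      then show ?thesis
        using False shape_sup_add_box_add_box[OF _ rl k] unfolding growth_rule_def \<lambda> \<mu> \<nu> by auto
    qed
  qed
qed

lemma growth_rule_snoc:
  assumes "distinct (l @ [a])"
  shows "below_shape (l @ [a]) (Suc j) =
    growth_rule (below_shape l j) (below_shape l (Suc j)) (below_shape (l @ [a]) j) (a = j)"
proof -
  consider "j < a" | "a = j" | "a < j" by fastforce
  then show ?thesis
  proof cases
    case 1
    then show ?thesis using growth_rule_snoc_above assms by simp
  next
    case 2
    then show ?thesis using growth_rule_snoc_eq assms by (simp add: growth_rule_def)
  next
    case 3
    then show ?thesis using growth_rule_snoc_below[OF assms] by simp
  qed
qed

text \<open>Growth diagram argument: the shapes \<open>below_shape (take i u) j\<close> are determined by the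
  marked cells \<open>u ! i = j\<close> through the symmetric local rule, so the diagram of the inverse
  permutation is the transposed diagram.\<close>
theorem rs_shape_inverse_perm_nat:
  fixes u v :: "nat list"
  assumes lu: "length u = N" and lv: "length v = N" and du: "distinct u" and dv: "distinct v"
    and su: "set u \<subseteq> {..<N}" and sv: "set v \<subseteq> {..<N}"
    and inv: "\<And>i j. i < N \<Longrightarrow> j < N \<Longrightarrow> u ! i = j \<longleftrightarrow> v ! j = i"
  shows "rs_shape u = rs_shape v"
proof -
  have growth: "below_shape (take (Suc i) w) (Suc j) =
      growth_rule (below_shape (take i w) j) (below_shape (take i w) (Suc j))
        (below_shape (take (Suc i) w) j) (w ! i = j)"
    if "distinct w" "i < length w" for w :: "nat list" and i j
  proof -
    have "take (Suc i) w = take i w @ [w ! i]" using that(2) by (rule take_Suc_conv_app_nth)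
    moreover from this have "distinct (take i w @ [w ! i])" using that(1) by (metis distinct_take)
    ultimately show ?thesis using growth_rule_snoc by simp
  qed
  have "below_shape (take i u) j = below_shape (take j v) i" if "i \<le> N" "j \<le> N" for i j
    using that
  proof (induction i arbitrary: j)
    case (Suc i)
    note row_i = Suc.IH and i = \<open>Suc i \<le> N\<close>
    from Suc.prems(2) show ?case
    proof (induction j)
      case (Suc j)
      have "below_shape (take (Suc i) u) (Suc j) =
          growth_rule (below_shape (take i u) j) (below_shape (take i u) (Suc j))
            (below_shape (take (Suc i) u) j) (u ! i = j)"
        using growth[OF du] i lu by simp
      also have "\<dots> = growth_rule (below_shape (take j v) i) (below_shape (take (Suc j) v) i)
          (below_shape (take j v) (Suc i)) (v ! j = i)"
        using row_i Suc.IH Suc.prems inv[of i j] i by simp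
      also have "\<dots> = below_shape (take (Suc j) v) (Suc i)"
        using growth[OF dv, of j i] Suc.prems lv growth_rule_commute by simp
      finally show ?case .
    qed (simp add: below_shape_def rs_shape_def)
  qed (simp add: below_shape_def rs_shape_def)
  then have "below_shape (take N u) N = below_shape (take N v) N" by simp
  moreover have "below_shape (take N u) N = rs_shape u" "below_shape (take N v) N = rs_shape v"
    unfolding below_shape_def using lu lv su sv by (auto simp: subset_iff filter_id_conv)
  ultimately show ?thesis by simp
qed

section \<open>Standardization\<close>

fun ties_ordered :: "('a::linorder \<Rightarrow> 'b::linorder) \<Rightarrow> 'a list list \<Rightarrow> bool" where
  "ties_ordered f [] = True"
| "ties_ordered f (t # ts) =
     ((\<forall>a\<in>set t. \<forall>b\<in>set (concat ts). f a = f b \<longrightarrow> b < a) \<and> ties_ordered f ts)"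

lemma set_tab_ins: "set (concat (tab_ins x T)) = insert x (set (concat T))"
  by (metis set_mset_mset set_mset_add_mset_insert tab_ins_mset)

lemma set_row_ins: "row_ins x r = (r', b) \<Longrightarrow> set r' \<subseteq> insert x (set r)"
  by (drule row_ins_mset) (metis Un_upper1 set_mset_add_mset_insert set_mset_mset set_mset_union)

lemma row_ins_map:
  assumes "\<forall>y\<in>set r. f y = f x \<longrightarrow> y < x" "x \<notin> set r" "mono_on (insert x (set r)) f"
  shows "row_ins (f x) (map f r) = (map f (fst (row_ins x r)), map_option f (snd (row_ins x r)))"
  using assms
proof (induction r)
  case (Cons y ys)
  have IH: "row_ins (f x) (map f ys) = (map f (fst (row_ins x ys)), map_option f (snd (row_ins x ys)))"
    using Cons by (intro Cons.IH) (auto elim: mono_on_subset)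
  show ?case
  proof (cases "x < y")
    case True
    then have "f x \<le> f y" using Cons.prems by (auto intro: mono_onD)
    moreover have "f y \<noteq> f x" using Cons.prems True by auto
    ultimately show ?thesis using True by simp
  next
    case False
    then have "y < x" using Cons.prems by (metis linorder_neqE list.set_intros(1))
    then have "f y \<le> f x" using Cons.prems by (auto intro: mono_onD)
    then show ?thesis using False IH by (auto split: prod.splits)
  qed
qed simp

lemma tab_ins_map:
  "ties_ordered f T \<Longrightarrow> distinct (concat T) \<Longrightarrow> x \<notin> set (concat T) \<Longrightarrow>
   \<forall>y\<in>set (concat T). f y = f x \<longrightarrow> y < x \<Longrightarrow> mono_on (insert x (set (concat T))) f \<Longrightarrow>
   tab_ins (f x) (map (map f) T) = map (map f) (tab_ins x T)"
proof (induction T arbitrary: x)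
  case (Cons t ts)
  have rm: "row_ins (f x) (map f t) = (map f (fst (row_ins x t)), map_option f (snd (row_ins x t)))"
    using Cons.prems by (intro row_ins_map) (auto elim: mono_on_subset)
  show ?case
  proof (cases "snd (row_ins x t)")
    case None
    then obtain t' where "row_ins x t = (t', None)" by (metis prod.collapse)
    then show ?thesis using rm by simp
  next
    case (Some y)
    then obtain t' where e: "row_ins x t = (t', Some y)" by (metis prod.collapse)
    have "y \<in> set t" using row_ins_bump[OF Some] by simp
    then have "tab_ins (f y) (map (map f) ts) = map (map f) (tab_ins y ts)"
      using Cons.prems by (intro Cons.IH) (auto elim!: mono_on_subset)
    then show ?thesis using rm by (simp add: e)
  qed
qed simp

lemma sorted_row_ins: "sorted_wrt (<) t \<Longrightarrow> x \<notin> set t \<Longrightarrow> sorted_wrt (<) (fst (row_ins x t))"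
proof (induction t)
  case (Cons z zs)
  show ?case
  proof (cases "x < z")
    case False
    then have "z < x" using Cons.prems by auto
    moreover have "set (fst (row_ins x zs)) \<subseteq> insert x (set zs)"
      using set_row_ins[of x zs] by (metis prod.collapse)
    ultimately show ?thesis using False Cons by (auto split: prod.splits)
  qed (use Cons.prems in auto)
qed simp

lemma row_ins_bump_least:
  "sorted_wrt (<) t \<Longrightarrow> snd (row_ins x t) = Some y \<Longrightarrow> a \<in> set t \<Longrightarrow> a < y \<Longrightarrow> \<not> x < a"
proof (induction t)
  case (Cons z zs)
  then show ?case by (cases "x < z") (auto split: prod.splits)
qed simp

lemma set_row_ins_bump:
  "distinct t \<Longrightarrow> snd (row_ins x t) = Some y \<Longrightarrow> a \<in> set (fst (row_ins x t)) \<Longrightarrow>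
   a = x \<or> (a \<in> set t \<and> a \<noteq> y)"
proof (induction t)
  case (Cons z zs)
  show ?case
  proof (cases "x < z")
    case False
    then have "snd (row_ins x zs) = Some y" using Cons.prems by (auto split: prod.splits)
    moreover from this have "y \<in> set zs" using row_ins_bump by blast
    ultimately show ?thesis using Cons False by (auto split: prod.splits)
  qed (use Cons.prems in auto)
qed simp

lemma sorted_rows_tab_ins:
  "\<forall>r\<in>set T. sorted_wrt (<) r \<Longrightarrow> x \<notin> set (concat T) \<Longrightarrow> distinct (concat T) \<Longrightarrow>
   \<forall>r\<in>set (tab_ins x T). sorted_wrt (<) r"
proof (induction T arbitrary: x)
  case (Cons t ts)
  have st: "sorted_wrt (<) (fst (row_ins x t))" using Cons.prems by (intro sorted_row_ins) auto
  show ?case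
  proof (cases "snd (row_ins x t)")
    case None
    then obtain t' where "row_ins x t = (t', None)" by (metis prod.collapse)
    then show ?thesis using st Cons.prems by simp
  next
    case (Some y)
    then obtain t' where e: "row_ins x t = (t', Some y)" by (metis prod.collapse)
    have "y \<in> set t" using row_ins_bump[OF Some] by simp
    then have "\<forall>r\<in>set (tab_ins y ts). sorted_wrt (<) r"
      using Cons.prems by (intro Cons.IH) auto
    then show ?thesis using st by (simp add: e)
  qed
qed simp

lemma sorted_rows_rs_tableau: "distinct xs \<Longrightarrow> \<forall>r\<in>set (rs_tableau xs). sorted_wrt (<) r"
proof (induction xs rule: rev_induct)
  case (snoc x xs)
  then show ?case unfolding rs_tableau_snoc
    using distinct_rs_tableau[of xs] set_rs_tableau[of xs] by (intro sorted_rows_tab_ins) auto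
qed simp

lemma row_ins_bump_ties:
  fixes f :: "'a::linorder \<Rightarrow> 'b::linorder"
  assumes sorted: "sorted_wrt (<) t" and x: "x \<notin> set t" and bump: "snd (row_ins x t) = Some y"
    and mono: "mono_on (insert x (set t)) f" and ties: "\<forall>a\<in>set t. f a = f x \<longrightarrow> a < x"
  shows "\<forall>a\<in>set (fst (row_ins x t)). f a = f y \<longrightarrow> y < a"
proof (intro ballI impI)
  fix a assume a: "a \<in> set (fst (row_ins x t))" and fa: "f a = f y"
  have yt: "y \<in> set t" and xy: "x < y" using row_ins_bump[OF bump] by auto
  have "f x \<le> f y" using mono xy yt by (auto intro: mono_onD)
  moreover have "f y \<noteq> f x" using ties yt xy by auto
  ultimately have fxy: "f x < f y" by simp
  have "a = x \<or> (a \<in> set t \<and> a \<noteq> y)"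
    using set_row_ins_bump[OF _ bump a] sorted by (simp add: strict_sorted_iff)
  then have at: "a \<in> set t" "a \<noteq> y" using fa fxy by auto
  show "y < a"
  proof (rule ccontr)
    assume "\<not> y < a"
    then have "\<not> x < a" using row_ins_bump_least[OF sorted bump at(1)] at by simp
    moreover have "a \<noteq> x" using x at by auto
    ultimately have "f a \<le> f x" using mono at by (auto intro: mono_onD)
    then show False using fa fxy by simp
  qed
qed

lemma ties_ordered_tab_ins:
  assumes "ties_ordered f T" "distinct (concat T)" "x \<notin> set (concat T)"
    "\<forall>r\<in>set T. sorted_wrt (<) r" "\<forall>y\<in>set (concat T). f y = f x \<longrightarrow> y < x"
    "mono_on (insert x (set (concat T))) f"
  shows "ties_ordered f (tab_ins x T)"
  using assms
proof (induction T arbitrary: x)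
  case (Cons t ts)
  show ?case
  proof (cases "snd (row_ins x t)")
    case None
    then have "row_ins x t = (t @ [x], None)"
      by (simp add: row_ins_no_bump[OF None[unfolded row_ins_no_bump_iff]])
    then show ?thesis using Cons.prems by auto
  next
    case (Some y)
    then obtain t' where e: "row_ins x t = (t', Some y)" by (metis prod.collapse)
    have yt: "y \<in> set t" using row_ins_bump[OF Some] by auto
    have IH: "ties_ordered f (tab_ins y ts)"
      using Cons.prems yt by (intro Cons.IH) (auto elim!: mono_on_subset)
    have bumped: "\<forall>a\<in>set t'. f a = f y \<longrightarrow> y < a"
    proof -
      have "mono_on (insert x (set t)) f" using Cons.prems(6) by (rule mono_on_subset) auto
      moreover have "sorted_wrt (<) t" "x \<notin> set t" "\<forall>a\<in>set t. f a = f x \<longrightarrow> a < x"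
        using Cons.prems(3-5) by simp_all
      ultimately show ?thesis using row_ins_bump_ties[OF _ _ Some, of f] e by simp
    qed
    have new_row: "f a = f c \<longrightarrow> c < a"
      if a: "a \<in> set t'" and c: "c \<in> set (concat (tab_ins y ts))" for a c
    proof -
      have "a = x \<or> (a \<in> set t \<and> a \<noteq> y)"
        using set_row_ins_bump[OF _ Some] a e Cons.prems(2) by simp
      moreover have "c = y \<or> c \<in> set (concat ts)" using c unfolding set_tab_ins by simp
      ultimately show ?thesis using bumped a Cons.prems(1,5) by auto
    qed
    show ?thesis using IH new_row by (simp add: e)
  qed
qed simp

lemma rs_tableau_map_standardize:
  fixes xs :: "'a::linorder list" and f :: "'a \<Rightarrow> 'b::linorder"
  shows "distinct xs \<Longrightarrow> mono_on (set xs) f \<Longrightarrow>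
    (\<forall>p q. p < q \<longrightarrow> q < length xs \<longrightarrow> f (xs ! p) = f (xs ! q) \<longrightarrow> xs ! p < xs ! q) \<Longrightarrow>
    ties_ordered f (rs_tableau xs) \<and> rs_tableau (map f xs) = map (map f) (rs_tableau xs)"
proof (induction xs rule: rev_induct)
  case (snoc x xs)
  have IH: "ties_ordered f (rs_tableau xs) \<and> rs_tableau (map f xs) = map (map f) (rs_tableau xs)"
  proof (rule snoc.IH)
    show "\<forall>p q. p < q \<longrightarrow> q < length xs \<longrightarrow> f (xs ! p) = f (xs ! q) \<longrightarrow> xs ! p < xs ! q"
    proof (intro allI impI)
      fix p q assume "p < q" "q < length xs" "f (xs ! p) = f (xs ! q)"
      then show "xs ! p < xs ! q" using snoc.prems(3)[rule_format, of p q] by (simp add: nth_append)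
    qed
  qed (use snoc.prems in \<open>auto elim: mono_on_subset\<close>)
  have ties_x: "\<forall>y\<in>set (concat (rs_tableau xs)). f y = f x \<longrightarrow> y < x"
  proof (intro ballI impI)
    fix y assume "y \<in> set (concat (rs_tableau xs))" "f y = f x"
    then have "y \<in> set xs" unfolding set_rs_tableau by simp
    then obtain p where "p < length xs" "xs ! p = y" by (auto simp: in_set_conv_nth)
    then show "y < x"
      using snoc.prems(3)[rule_format, of p "length xs"] \<open>f y = f x\<close> by (simp add: nth_append)
  qed
  have X: "x \<notin> set (concat (rs_tableau xs))" and M: "mono_on (insert x (set (concat (rs_tableau xs)))) f"
    unfolding set_rs_tableau using snoc.prems by simp_all
  have D: "distinct (concat (rs_tableau xs))" and S: "\<forall>r\<in>set (rs_tableau xs). sorted_wrt (<) r"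
    using snoc.prems distinct_rs_tableau[of xs] sorted_rows_rs_tableau[of xs] by simp_all
  show ?case
    unfolding rs_tableau_snoc map_append list.map
    using tab_ins_map[OF _ D X ties_x M] ties_ordered_tab_ins[OF _ D X S ties_x M] IH by simp
qed simp

theorem rs_shape_map_standardize:
  fixes xs :: "'a::linorder list" and f :: "'a \<Rightarrow> 'b::linorder"
  assumes "distinct xs" "mono_on (set xs) f"
    "\<And>p q. p < q \<Longrightarrow> q < length xs \<Longrightarrow> f (xs ! p) = f (xs ! q) \<Longrightarrow> xs ! p < xs ! q"
  shows "rs_shape (map f xs) = rs_shape xs"
  using rs_tableau_map_standardize[of xs f] assms unfolding rs_shape_def by (simp add: comp_def)

corollary rs_shape_map_strict_mono:
  fixes xs :: "'a::linorder list" and f :: "'a \<Rightarrow> 'b::linorder"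
  assumes "distinct xs" "strict_mono_on (set xs) f"
  shows "rs_shape (map f xs) = rs_shape xs"
proof (rule rs_shape_map_standardize)
  fix p q assume "p < q" "q < length xs" "f (xs ! p) = f (xs ! q)"
  show "xs ! p < xs ! q"
  proof (rule ccontr)
    assume "\<not> xs ! p < xs ! q"
    moreover have "xs ! p \<noteq> xs ! q" using assms(1) \<open>p < q\<close> \<open>q < length xs\<close> by (simp add: nth_eq_iff_index_eq)
    ultimately have "f (xs ! q) < f (xs ! p)"
      using strict_mono_onD[OF assms(2)] \<open>p < q\<close> \<open>q < length xs\<close> by simp
    then show False using \<open>f (xs ! p) = f (xs ! q)\<close> by simp
  qed
qed (use assms strict_mono_on_imp_mono_on in auto)

lemma strict_mono_on_rank_in_sorted:
  fixes xs :: "'a::linorder list"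
  assumes "sorted_wrt (<) xs"
  shows "strict_mono_on (set xs) (the_inv_into {..<length xs} ((!) xs))"
proof (rule strict_mono_onI)
  let ?rank = "the_inv_into {..<length xs} ((!) xs)"
  have "distinct xs" using assms by (simp add: strict_sorted_iff)
  then have bij: "bij_betw ((!) xs) {..<length xs} (set xs)" by (rule bij_betw_nth) simp_all
  fix x y assume xy: "x \<in> set xs" "y \<in> set xs" "x < y"
  have rk: "?rank z < length xs" "xs ! ?rank z = z" if "z \<in> set xs" for z
    using bij_betwE[OF bij_betw_the_inv_into[OF bij]] f_the_inv_into_f_bij_betw[OF bij] that by auto
  show "?rank x < ?rank y"
  proof (rule ccontr)
    assume "\<not> ?rank x < ?rank y"
    then have "y \<le> x"
      using sorted_nth_mono[of xs "?rank y" "?rank x"] assms rk xy by (simp add: strict_sorted_iff)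
    then show False using xy by simp
  qed
qed

lemma bij_betw_left_inverse:
  assumes bij: "bij_betw \<sigma> A B" and inv: "\<And>x. x \<in> A \<Longrightarrow> \<tau> (\<sigma> x) = x"
  shows "bij_betw \<tau> B A" and "\<And>y. y \<in> B \<Longrightarrow> \<sigma> (\<tau> y) = y"
proof -
  have \<sigma>_\<tau>: "\<sigma> (\<tau> y) = y \<and> \<tau> y \<in> A" if "y \<in> B" for y
  proof -
    obtain x where "x \<in> A" "y = \<sigma> x" using bij \<open>y \<in> B\<close> by (auto simp: bij_betw_def)
    then show ?thesis using inv by simp
  qed
  then show "\<And>y. y \<in> B \<Longrightarrow> \<sigma> (\<tau> y) = y" by simp
  show "bij_betw \<tau> B A"
    by (rule bij_betw_byWitness[where f' = \<sigma>]) (use \<sigma>_\<tau> inv bij_betwE[OF bij] in auto)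
qed

theorem rs_shape_inverse_perm:
  fixes xs :: "'a::linorder list" and \<sigma> \<tau> :: "'a \<Rightarrow> 'a"
  assumes sorted: "sorted_wrt (<) xs" and bij: "bij_betw \<sigma> (set xs) (set xs)"
    and inv: "\<And>x. x \<in> set xs \<Longrightarrow> \<tau> (\<sigma> x) = x"
  shows "rs_shape (map \<tau> xs) = rs_shape (map \<sigma> xs)"
proof -
  define N where "N = length xs"
  define rank where "rank = the_inv_into {..<N} ((!) xs)"
  have dist: "distinct xs" using sorted by (simp add: strict_sorted_iff)
  have nth_bij: "bij_betw ((!) xs) {..<N} (set xs)" unfolding N_def using dist by (rule bij_betw_nth) simp_all
  then have rank_bij: "bij_betw rank (set xs) {..<N}" unfolding rank_def by (rule bij_betw_the_inv_into)
  have rank_nth: "rank (xs ! i) = i" if "i < N" for i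
    unfolding rank_def using nth_bij that by (simp add: bij_betw_def the_inv_into_f_f)
  have nth_rank: "xs ! rank x = x" if "x \<in> set xs" for x
    unfolding rank_def using f_the_inv_into_f_bij_betw[OF nth_bij] that by simp
  note \<tau>_bij = bij_betw_left_inverse(1)[OF bij inv] and \<sigma>_\<tau> = bij_betw_left_inverse(2)[OF bij inv]
  have rank_eq: "rank z = j \<longleftrightarrow> z = xs ! j" if "z \<in> set xs" "j < N" for z j
    using that nth_rank rank_nth by auto
  have mono: "strict_mono_on (set xs) rank"
    unfolding rank_def N_def by (rule strict_mono_on_rank_in_sorted[OF sorted])
  have relabel: "rs_shape (map rank (map g xs)) = rs_shape (map g xs)"
    if "bij_betw g (set xs) (set xs)" for g
    using that dist by (intro rs_shape_map_strict_mono)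
      (auto simp: distinct_map bij_betw_def intro: monotone_on_subset[OF mono])
  have ranked: "distinct (map rank (map g xs)) \<and> set (map rank (map g xs)) \<subseteq> {..<N}"
    if "bij_betw g (set xs) (set xs)" for g
    using dist bij_betw_trans[OF that rank_bij] by (auto simp: distinct_map bij_betw_def)
  have "rs_shape (map rank (map \<sigma> xs)) = rs_shape (map rank (map \<tau> xs))"
  proof (rule rs_shape_inverse_perm_nat)
    show "length (map rank (map \<sigma> xs)) = N" "length (map rank (map \<tau> xs)) = N"
      unfolding N_def by simp_all
    fix i j assume ij: "i < N" "j < N"
    then have xs: "xs ! i \<in> set xs" "xs ! j \<in> set xs" unfolding N_def by simp_all
    have "map rank (map \<sigma> xs) ! i = j \<longleftrightarrow> \<sigma> (xs ! i) = xs ! j"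
      using ij xs bij_betwE[OF bij] rank_eq N_def by simp
    also have "\<dots> \<longleftrightarrow> \<tau> (xs ! j) = xs ! i" using xs inv \<sigma>_\<tau> by metis
    also have "\<dots> \<longleftrightarrow> map rank (map \<tau> xs) ! j = i"
      using ij xs bij_betwE[OF \<tau>_bij] rank_eq N_def by simp
    finally show "map rank (map \<sigma> xs) ! i = j \<longleftrightarrow> map rank (map \<tau> xs) ! j = i" .
  qed (use ranked[OF bij] ranked[OF \<tau>_bij] in auto)
  then show ?thesis using relabel[OF bij] relabel[OF \<tau>_bij] by simp
qed

corollary rs_shape_map_inverse_standardize:
  fixes xs :: "'a::linorder list" and \<sigma> \<tau> :: "'a \<Rightarrow> 'a" and f :: "'a \<Rightarrow> 'b::linorder"
  assumes sorted: "sorted_wrt (<) xs" and bij: "bij_betw \<sigma> (set xs) (set xs)"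
    and inv: "\<And>x. x \<in> set xs \<Longrightarrow> \<tau> (\<sigma> x) = x"
    and mono: "mono_on (set xs) f"
    and ties: "\<And>x y. x \<in> set xs \<Longrightarrow> y \<in> set xs \<Longrightarrow> x < y \<Longrightarrow> f x = f y \<Longrightarrow> \<sigma> x < \<sigma> y"
  shows "rs_shape (map (f \<circ> \<tau>) xs) = rs_shape (map \<sigma> xs)"
proof -
  note \<tau>_bij = bij_betw_left_inverse(1)[OF bij inv] and \<sigma>_\<tau> = bij_betw_left_inverse(2)[OF bij inv]
  have dist: "distinct xs" using sorted by (simp add: strict_sorted_iff)
  have "rs_shape (map f (map \<tau> xs)) = rs_shape (map \<tau> xs)"
  proof (rule rs_shape_map_standardize)
    show "distinct (map \<tau> xs)" using dist \<tau>_bij by (simp add: distinct_map bij_betw_def)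
    show "mono_on (set (map \<tau> xs)) f" using mono bij_betwE[OF \<tau>_bij] by (auto elim: mono_on_subset)
    fix p q assume pq: "p < q" "q < length (map \<tau> xs)" "f (map \<tau> xs ! p) = f (map \<tau> xs ! q)"
    then have in_xs: "xs ! p \<in> set xs" "xs ! q \<in> set xs" by simp_all
    have "\<tau> (xs ! p) \<noteq> \<tau> (xs ! q)"
      using pq in_xs dist \<sigma>_\<tau> by (metis nth_eq_iff_index_eq length_map order.strict_trans less_irrefl)
    moreover have "\<not> \<tau> (xs ! q) < \<tau> (xs ! p)"
    proof
      assume "\<tau> (xs ! q) < \<tau> (xs ! p)"
      then have "xs ! q < xs ! p"
        using ties[of "\<tau> (xs ! q)" "\<tau> (xs ! p)"] pq in_xs bij_betwE[OF \<tau>_bij] \<sigma>_\<tau> by simp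
      then show False using sorted_wrt_nth_less[OF sorted pq(1)] pq(2) by simp
    qed
    ultimately show "map \<tau> xs ! p < map \<tau> xs ! q" using pq by simp
  qed
  then show ?thesis using rs_shape_inverse_perm[OF sorted bij inv] by simp
qed

section \<open>Coxeter length in the hyperoctahedral group\<close>

definition signed_range :: "nat \<Rightarrow> int set" where
  "signed_range n = {x. 1 \<le> \<bar>x\<bar> \<and> \<bar>x\<bar> \<le> int n}"

lemma signed_range_nonzero: "x \<in> signed_range n \<Longrightarrow> x \<noteq> 0"
  by (auto simp: signed_range_def)

lemma finite_signed_range: "finite (signed_range n)"
  by (rule finite_subset[of _ "{-int n..int n}"]) (auto simp: signed_range_def)

lemma signed_perm_iff:
  "signed_perm n w \<longleftrightarrow> bij_betw w (signed_range n) (signed_range n) \<and> (\<forall>x. w (-x) = - w x)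
     \<and> (\<forall>x. x \<notin> signed_range n \<longrightarrow> w x = x)"
  unfolding signed_perm_def signed_range_def by simp

definition inversions :: "int set \<Rightarrow> (int \<Rightarrow> int) \<Rightarrow> int" where
  "inversions D u = (\<Sum>(a, b)\<in>D \<times> D. if a < b \<and> u b < u a then 1 else 0)"

text \<open>Composing with the transposition of two neighbours \<open>p < q\<close> of \<open>D\<close> changes only the
  inversion status of the pair \<open>(p, q)\<close>.\<close>
lemma inversions_comp_transpose:
  assumes fin: "finite D" and pq: "p \<in> D" "q \<in> D" "p < q"
    and adj: "\<forall>c\<in>D. \<not> (p < c \<and> c < q)"
  shows "inversions D (u \<circ> transpose p q) =
    inversions D u - (if u q < u p then 1 else 0) + (if u p < u q then 1 else 0)"
proof -
  let ?t = "transpose p q" and ?S = "D \<times> D" and ?E = "{(p, q), (q, p)}"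
  define g where "g = (\<lambda>(a, b). if ?t a < ?t b \<and> u b < u a then 1 else (0::int))"
  define g0 where "g0 = (\<lambda>(a, b). if a < b \<and> u b < u a then 1 else (0::int))"
  have tD: "?t x \<in> D" if "x \<in> D" for x using that pq by (auto simp: transpose_def)
  have "inversions D (u \<circ> ?t) = sum g ?S"
    unfolding inversions_def g_def
    by (rule sum.reindex_bij_witness[where i="\<lambda>(a, b). (?t a, ?t b)" and j="\<lambda>(a, b). (?t a, ?t b)"])
       (auto simp: tD)
  also have "\<dots> = sum g (?S - ?E) + sum g ?E"
    by (rule sum.subset_diff) (use pq fin in auto)
  also have "sum g (?S - ?E) = sum g0 (?S - ?E)"
  proof (rule sum.cong[OF refl])
    fix x assume "x \<in> ?S - ?E"
    then obtain a b where "x = (a, b)" "a \<in> D" "b \<in> D" "(a, b) \<noteq> (p, q)" "(a, b) \<noteq> (q, p)"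
      by auto
    moreover from this have "?t a < ?t b \<longleftrightarrow> a < b"
      using adj pq by (auto simp: transpose_def)
    ultimately show "g x = g0 x" unfolding g_def g0_def by simp
  qed
  also have "sum g0 (?S - ?E) = inversions D u - sum g0 ?E"
    unfolding inversions_def g0_def[symmetric] using sum.subset_diff[of ?E ?S g0] pq fin by auto
  finally show ?thesis using pq(3) unfolding g_def g0_def comp_def by auto
qed

definition negatives :: "nat \<Rightarrow> (int \<Rightarrow> int) \<Rightarrow> int" where
  "negatives n u = (\<Sum>i\<in>{1..int n}. if u i < 0 then 1 else 0)"

text \<open>Twice the Coxeter length, see \<open>cox_length_signed_perm\<close>.\<close>
definition length_statistic :: "nat \<Rightarrow> (int \<Rightarrow> int) \<Rightarrow> int" where
  "length_statistic n u = inversions (signed_range n) u + negatives n u"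

lemma length_statistic_id: "length_statistic n id = 0"
  unfolding length_statistic_def inversions_def negatives_def by (auto intro!: sum.neutral)

lemma length_statistic_nonneg: "0 \<le> length_statistic n w"
  unfolding length_statistic_def inversions_def negatives_def
  by (intro add_nonneg_nonneg sum_nonneg) auto

lemma sgen_eq_transpose: "1 \<le> k \<Longrightarrow> sgen k = transpose k (k + 1) \<circ> transpose (-(k + 1)) (-k)"
  unfolding sgen_def transpose_def by (rule ext) auto

lemma tgen_eq_transpose: "tgen = transpose (-1) 1"
  unfolding tgen_def transpose_def by (rule ext) auto

lemma inversions_comp_sgen:
  assumes "1 \<le> k" "k < int n"
  shows "inversions (signed_range n) (w \<circ> sgen k) = inversions (signed_range n) w
     - (if w (k + 1) < w k then 1 else 0) + (if w k < w (k + 1) then 1 else 0)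
     - (if w (-k) < w (-(k + 1)) then 1 else 0) + (if w (-(k + 1)) < w (-k) then 1 else 0)"
proof -
  let ?w' = "w \<circ> transpose k (k + 1)"
  have "w \<circ> sgen k = ?w' \<circ> transpose (-(k + 1)) (-k)"
    using sgen_eq_transpose[OF assms(1)] by (simp add: comp_assoc)
  moreover have "?w' (-k) = w (-k)" "?w' (-(k + 1)) = w (-(k + 1))" using assms by auto
  moreover have "inversions (signed_range n) ?w' = inversions (signed_range n) w
     - (if w (k + 1) < w k then 1 else 0) + (if w k < w (k + 1) then 1 else 0)"
    by (rule inversions_comp_transpose[OF finite_signed_range])
      (use assms in \<open>auto simp: signed_range_def\<close>)
  moreover have "inversions (signed_range n) (?w' \<circ> transpose (-(k + 1)) (-k)) =
      inversions (signed_range n) ?w'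
     - (if ?w' (-k) < ?w' (-(k + 1)) then 1 else 0) + (if ?w' (-(k + 1)) < ?w' (-k) then 1 else 0)"
    by (rule inversions_comp_transpose[OF finite_signed_range])
      (use assms in \<open>auto simp: signed_range_def\<close>)
  ultimately show ?thesis by simp
qed

lemma inversions_comp_tgen:
  "1 \<le> n \<Longrightarrow> inversions (signed_range n) (w \<circ> tgen) = inversions (signed_range n) w
     - (if w 1 < w (-1) then 1 else 0) + (if w (-1) < w 1 then 1 else 0)"
  unfolding tgen_eq_transpose
  by (rule inversions_comp_transpose[OF finite_signed_range]) (auto simp: signed_range_def)

lemma negatives_comp_sgen:
  "1 \<le> k \<Longrightarrow> k < int n \<Longrightarrow> negatives n (w \<circ> sgen k) = negatives n w"
  unfolding negatives_def
  by (rule sum.reindex_bij_witness[where i="sgen k" and j="sgen k"]) (auto simp: sgen_def)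

lemma negatives_comp_tgen:
  assumes "1 \<le> n"
  shows "negatives n (w \<circ> tgen) =
    negatives n w - (if w 1 < 0 then 1 else 0) + (if w (-1) < 0 then 1 else 0)"
proof -
  have one: "1 \<in> {1..int n}" using assms by simp
  have "negatives n (w \<circ> tgen) =
      (if w (-1) < 0 then 1 else 0) + (\<Sum>i\<in>{1..int n} - {1}. if w i < 0 then 1 else 0)"
    unfolding negatives_def by (subst sum.remove[OF _ one]) (auto simp: tgen_def intro!: sum.cong)
  also have "\<dots> = (if w (-1) < 0 then 1 else 0) + negatives n w - (if w 1 < 0 then 1 else 0)"
    unfolding negatives_def using sum.remove[OF _ one, of "\<lambda>i. if w i < 0 then 1 else 0::int"] by simp
  finally show ?thesis by simp
qed

lemma simple_refl_eq: "k < n \<Longrightarrow> simple_refl n (n - k) = (if k = 0 then tgen else sgen (int k))"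
  unfolding simple_refl_def by auto

lemma simple_refl_in_generators: "k < n \<Longrightarrow> simple_refl n (n - k) \<in> generators n"
  unfolding simple_refl_eq generators_def by auto

lemma odd_fun_zero:
  fixes f :: "'a::ab_group_add \<Rightarrow> 'b::linordered_idom"
  assumes "\<forall>x. f (-x) = - f x"
  shows "f 0 = 0"
  using assms[rule_format, of 0] by simp

lemma length_statistic_descent:
  assumes odd: "\<forall>x. w (-x) = - w x" and k: "k < n" and desc: "w (int k + 1) < w (int k)"
  shows "length_statistic n (w \<circ> simple_refl n (n - k)) = length_statistic n w - 2"
proof (cases "k = 0")
  case True
  then have "w (-1) = - w 1" "w 1 < 0" using odd desc odd_fun_zero[OF odd] by simp_all
  then show ?thesis
    using True k inversions_comp_tgen[of n w] negatives_comp_tgen[of n w]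
    unfolding length_statistic_def simple_refl_eq[OF k] by auto
next
  case False
  then have "1 \<le> int k" "int k < int n" using k by auto
  moreover have "w (- int k) < w (- (int k + 1))" using odd desc by (metis neg_less_iff_less)
  ultimately show ?thesis
    using False desc inversions_comp_sgen[of "int k" n w] negatives_comp_sgen[of "int k" n w]
    unfolding length_statistic_def simple_refl_eq[OF k] by auto
qed

lemma generator_cases:
  assumes "g \<in> generators n"
  obtains k where "g = sgen (int k)" "1 \<le> k" "k < n" | "g = tgen"
  using assms unfolding generators_def by auto

lemma length_statistic_comp_generator_le:
  assumes "1 \<le> n" "g \<in> generators n"
  shows "length_statistic n (w \<circ> g) \<le> length_statistic n w + 2"
proof -
  from assms(2) show ?thesis
  proof (cases rule: generator_cases)
    case (1 k)
    then have "1 \<le> int k" "int k < int n" by auto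
    then show ?thesis
      using 1 inversions_comp_sgen[of "int k" n w] negatives_comp_sgen[of "int k" n w]
      unfolding length_statistic_def by auto
  next
    case 2
    then show ?thesis
      using assms(1) inversions_comp_tgen[of n w] negatives_comp_tgen[of n w]
      unfolding length_statistic_def by auto
  qed
qed

lemma generator_involution: "g \<in> generators n \<Longrightarrow> g (g x) = x"
  by (elim generator_cases) (auto simp: sgen_def tgen_def)

lemma signed_perm_generator:
  assumes "1 \<le> n" "g \<in> generators n"
  shows "signed_perm n g"
proof -
  have "(\<forall>x. g (-x) = - g x) \<and> (\<forall>x. x \<in> signed_range n \<longrightarrow> g x \<in> signed_range n)
    \<and> (\<forall>x. x \<notin> signed_range n \<longrightarrow> g x = x)"
    using assms(2)
  proof (cases rule: generator_cases)
    case 1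
    then show ?thesis unfolding signed_range_def sgen_def by auto
  next
    case 2
    then show ?thesis using assms(1) unfolding signed_range_def tgen_def by auto
  qed
  moreover have "bij_betw g (signed_range n) (signed_range n)"
    by (rule bij_betw_byWitness[where f' = g])
      (use calculation generator_involution[OF assms(2)] in auto)
  ultimately show ?thesis unfolding signed_perm_iff by blast
qed

lemma signed_perm_comp: "signed_perm n v \<Longrightarrow> signed_perm n w \<Longrightarrow> signed_perm n (v \<circ> w)"
  unfolding signed_perm_iff by (auto intro: bij_betw_trans)

lemma signed_perm_adjacent_neq:
  assumes sp: "signed_perm n w" and k: "k < n"
  shows "w (int k) \<noteq> w (int k + 1)"
proof -
  have bij: "bij_betw w (signed_range n) (signed_range n)" and odd: "\<forall>x. w (-x) = - w x"
    using sp unfolding signed_perm_iff by auto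
  have k1: "int k + 1 \<in> signed_range n" using k by (auto simp: signed_range_def)
  show ?thesis
  proof (cases "k = 0")
    case True
    then show ?thesis using odd_fun_zero[OF odd] bij_betw_apply[OF bij k1] signed_range_nonzero by force
  next
    case False
    then have "int k \<in> signed_range n" using k by (auto simp: signed_range_def)
    then show ?thesis using inj_onD[OF bij_betw_imp_inj_on[OF bij] _ _ k1] by fastforce
  qed
qed

text \<open>Since \<open>w 0 = 0\<close> and \<open>w n \<le> n\<close>, the \<open>n\<close> increasing steps force \<open>w k = k\<close>.\<close>
lemma signed_perm_increasing_id:
  assumes n: "1 \<le> n" and sp: "signed_perm n w" and asc: "\<And>k. k < n \<Longrightarrow> w (int k) < w (int k + 1)"
  shows "w = id"
proof -
  have bij: "bij_betw w (signed_range n) (signed_range n)" and odd: "\<forall>x. w (-x) = - w x"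
    and out: "\<forall>x. x \<notin> signed_range n \<longrightarrow> w x = x"
    using sp unfolding signed_perm_iff by auto
  have up: "int j \<le> w (int j)" if "j \<le> n" for j
    using that
  proof (induction j)
    case (Suc j)
    then have "int j \<le> w (int j)" "w (int j) < w (int j + 1)" using asc by simp_all
    then show ?case by (simp add: add.commute)
  qed (simp add: odd_fun_zero[OF odd])
  have down: "w (int n - int j) \<le> int n - int j" if "j \<le> n" for j
    using that
  proof (induction j)
    case 0
    have "int n \<in> signed_range n" using n by (simp add: signed_range_def)
    then have "w (int n) \<in> signed_range n" using bij_betwE[OF bij] by blast
    then show ?case by (simp add: signed_range_def abs_le_iff)
  next
    case (Suc j)
    then have "w (int (n - Suc j)) < w (int (n - Suc j) + 1)" by (intro asc) simp
    with Suc show ?case by (simp add: of_nat_diff algebra_simps)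
  qed
  have pos: "w i = i" if "1 \<le> i" "i \<le> int n" for i
    using up[of "nat i"] down[of "n - nat i"] that by simp
  have "w x = x" for x
  proof (cases "x \<in> signed_range n")
    case True
    then consider "1 \<le> x" "x \<le> int n" | "1 \<le> -x" "-x \<le> int n"
      unfolding signed_range_def by (cases "0 \<le> x") auto
    then show ?thesis
    proof cases
      case 2
      then show ?thesis using pos[of "-x"] odd by (metis minus_minus)
    qed (use pos in simp)
  qed (use out in simp)
  then show ?thesis by auto
qed

lemma signed_perm_descent:
  assumes n: "1 \<le> n" and sp: "signed_perm n w" and nid: "w \<noteq> id"
  shows "\<exists>k<n. w (int k + 1) < w (int k)"
  using signed_perm_increasing_id[OF n sp] signed_perm_adjacent_neq[OF sp] nid
  by (meson linorder_neqE)

lemma foldr_comp_id: "foldr (\<circ>) xs g = foldr (\<circ>) xs id \<circ> g"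
  by (induction xs) auto

lemma word_of_length_statistic:
  assumes n: "1 \<le> n"
  shows "signed_perm n w \<Longrightarrow>
    \<exists>ws. set ws \<subseteq> generators n \<and> foldr (\<circ>) ws id = w \<and> 2 * int (length ws) = length_statistic n w"
proof (induction "nat (length_statistic n w)" arbitrary: w rule: less_induct)
  case less
  show ?case
  proof (cases "w = id")
    case True
    then show ?thesis using length_statistic_id by (intro exI[of _ "[]"]) auto
  next
    case False
    then obtain k where k: "k < n" "w (int k + 1) < w (int k)"
      using signed_perm_descent[OF n less.prems] by blast
    define g where "g = simple_refl n (n - k)"
    have g: "g \<in> generators n" unfolding g_def using k(1) by (rule simple_refl_in_generators)
    have odd: "\<forall>x. w (-x) = - w x" using less.prems signed_perm_iff by auto
    have stat: "length_statistic n (w \<circ> g) = length_statistic n w - 2"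
      unfolding g_def using length_statistic_descent[OF odd k] .
    have "signed_perm n (w \<circ> g)"
      using signed_perm_comp[OF less.prems signed_perm_generator[OF n g]] .
    moreover have "nat (length_statistic n (w \<circ> g)) < nat (length_statistic n w)"
      using stat length_statistic_nonneg[of n "w \<circ> g"] by simp
    ultimately obtain ws where ws: "set ws \<subseteq> generators n" "foldr (\<circ>) ws id = w \<circ> g"
      "2 * int (length ws) = length_statistic n (w \<circ> g)"
      using less.hyps by blast
    have "foldr (\<circ>) (ws @ [g]) id = w"
      using ws(2) foldr_comp_id[of ws g] generator_involution[OF g] by (simp add: comp_assoc fun_eq_iff)
    then show ?thesis using ws g stat by (intro exI[of _ "ws @ [g]"]) auto
  qed
qed

lemma length_statistic_word_le:
  assumes n: "1 \<le> n"
  shows "set ws \<subseteq> generators n \<Longrightarrow> length_statistic n (foldr (\<circ>) ws id) \<le> 2 * int (length ws)"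
proof (induction ws rule: rev_induct)
  case (snoc g ws)
  have "length_statistic n (foldr (\<circ>) ws id \<circ> g) \<le> length_statistic n (foldr (\<circ>) ws id) + 2"
    using length_statistic_comp_generator_le[OF n] snoc.prems by simp
  moreover have "length_statistic n (foldr (\<circ>) ws id) \<le> 2 * int (length ws)"
    by (rule snoc.IH) (use snoc.prems in simp)
  moreover have "foldr (\<circ>) (ws @ [g]) id = foldr (\<circ>) ws id \<circ> g"
    using foldr_comp_id[of ws g] by simp
  ultimately show ?case by (simp only: length_append_singleton of_nat_Suc distrib_left)
qed (simp add: length_statistic_id)

theorem cox_length_signed_perm:
  assumes n: "1 \<le> n" and sp: "signed_perm n w"
  shows "2 * int (cox_length n w) = length_statistic n w"
proof -
  let ?P = "\<lambda>m. \<exists>ws. length ws = m \<and> set ws \<subseteq> generators n \<and> foldr (\<circ>) ws id = w"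
  obtain ws where ws: "set ws \<subseteq> generators n" "foldr (\<circ>) ws id = w"
    "2 * int (length ws) = length_statistic n w"
    using word_of_length_statistic[OF n sp] by blast
  then have "cox_length n w \<le> length ws" unfolding cox_length_def by (intro Least_le) blast
  moreover obtain vs where "length vs = cox_length n w" "set vs \<subseteq> generators n" "foldr (\<circ>) vs id = w"
    using LeastI[of ?P "length ws"] ws unfolding cox_length_def by blast
  then have "length_statistic n w \<le> 2 * int (cox_length n w)"
    using length_statistic_word_le[OF n] by metis
  ultimately show ?thesis using ws(3) by linarith
qed

lemma cox_length_ascent:
  assumes n: "1 \<le> n" and sp: "signed_perm n w" and k: "k < n"
    and asc: "cox_length n (w \<circ> simple_refl n (n - k)) = cox_length n w + 1"
  shows "w (int k) < w (int k + 1)"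
proof (rule ccontr)
  have odd: "\<forall>x. w (-x) = - w x" using sp unfolding signed_perm_iff by auto
  assume "\<not> ?thesis"
  then have "w (int k + 1) < w (int k)" using signed_perm_adjacent_neq[OF sp k] by simp
  then have "length_statistic n (w \<circ> simple_refl n (n - k)) = length_statistic n w - 2"
    using length_statistic_descent[OF odd k] by simp
  moreover have "signed_perm n (w \<circ> simple_refl n (n - k))"
    using signed_perm_comp[OF sp signed_perm_generator[OF n simple_refl_in_generators[OF k]]] .
  ultimately show False
    using cox_length_signed_perm[OF n sp] cox_length_signed_perm[OF n] asc by force
qed

section \<open>The anti-dominant weight\<close>

lemma odd_chain_mono_ties:
  fixes c :: "int \<Rightarrow> real" and w :: "int \<Rightarrow> int"
  assumes c_odd: "\<And>y. c (-y) = - c y" and w_odd: "\<And>y. w (-y) = - w y"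
    and mono: "\<And>k. k < n \<Longrightarrow> c (int k) \<le> c (int k + 1)"
    and asc: "\<And>k. k < n \<Longrightarrow> c (int k) = c (int k + 1) \<Longrightarrow> w (int k) < w (int k + 1)"
  shows "mono_on {-int n..int n} c"
    and "\<And>x y. x \<in> {-int n..int n} \<Longrightarrow> y \<in> {-int n..int n} \<Longrightarrow> x < y \<Longrightarrow> c x = c y \<Longrightarrow> w x < w y"
proof -
  have c0: "c 0 = 0" and w0: "w 0 = 0" using c_odd[of 0] w_odd[of 0] by simp_all
  have mono_nat: "c (int a) \<le> c (int b)" if "a \<le> b" "b \<le> n" for a b
    by (rule lift_Suc_mono_le_ivl[of "{..<n}" "\<lambda>k. c (int k)"]) (use mono that in \<open>auto simp: add.commute\<close>)
  have ties_nat: "w (int a) < w (int b)" if "a < b" "b \<le> n" "c (int a) = c (int b)" for a b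
  proof (rule lift_Suc_mono_less_ivl[of "{a..<b}" "\<lambda>k. w (int k)", OF _ \<open>a < b\<close> order.refl])
    fix k assume "k \<in> {a..<b}"
    then have "c (int a) \<le> c (int k)" "c (int k) \<le> c (int k + 1)" "c (int (Suc k)) \<le> c (int b)"
      using mono_nat[of a k] mono[of k] mono_nat[of "Suc k" b] that by auto
    then show "w (int k) < w (int (Suc k))"
      using asc[of k] that \<open>k \<in> {a..<b}\<close> by (simp add: add.commute)
  qed
  have mono_nonneg: "c x \<le> c y" if "0 \<le> x" "x \<le> y" "y \<le> int n" for x y
    using mono_nat[of "nat x" "nat y"] that by simp
  have ties_nonneg: "w x < w y" if "0 \<le> x" "x < y" "y \<le> int n" "c x = c y" for x y
    using ties_nat[of "nat x" "nat y"] that by simp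
  show "mono_on {-int n..int n} c"
  proof (rule mono_onI)
    fix x y assume "x \<in> {-int n..int n}" "y \<in> {-int n..int n}" "x \<le> y"
    then show "c x \<le> c y"
      using mono_nonneg[of x y] mono_nonneg[of "-y" "-x"] mono_nonneg[of 0 "-x"] mono_nonneg[of 0 y]
      by (cases "0 \<le> x"; cases "y \<le> 0") (auto simp: c_odd c0)
  qed
  fix x y assume xy: "x \<in> {-int n..int n}" "y \<in> {-int n..int n}" "x < y" "c x = c y"
  have ties_nonpos: "w u < w v" if "-int n \<le> u" "u < v" "v \<le> 0" "c u = c v" for u v
    using ties_nonneg[of "-v" "-u"] that by (simp add: c_odd w_odd)
  show "w x < w y"
  proof (cases "0 \<le> x \<or> y \<le> 0")
    case True
    then show ?thesis using xy ties_nonneg ties_nonpos by auto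
  next
    case False
    then have "c x \<le> c 0" "c 0 \<le> c y"
      using mono_nonneg[of 0 "-x"] mono_nonneg[of 0 y] xy by (auto simp: c_odd c0)
    then have "c x = c 0" "c 0 = c y" using xy(4) by auto
    then show ?thesis using ties_nonpos[of x 0] ties_nonneg[of 0 y] False xy by auto
  qed
qed

text \<open>Listed along \<open>-n, \<dots>, -1, 1, \<dots>, n\<close>, these numbers are the real parts of \<open>\<mu>\<^sup>-\<close>.\<close>
definition weight_coord :: "nat \<Rightarrow> (nat \<Rightarrow> complex) \<Rightarrow> int \<Rightarrow> real" where
  "weight_coord n \<mu> y = (if y = 0 then 0 else - of_int (sgn y) * Re (\<mu> (n + 1 - nat \<bar>y\<bar>)))"

lemma weight_coord_uminus: "weight_coord n \<mu> (-y) = - weight_coord n \<mu> y"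
  unfolding weight_coord_def by (simp add: sgn_minus)

lemma sum_evec: "(\<Sum>j=1..n. f j * evec i j) = (if 1 \<le> i \<and> i \<le> n then f i else 0)"
  unfolding evec_def by (simp add: if_distrib sum.delta cong: if_cong)

lemma pairing_simple_root:
  assumes "1 \<le> i" "i \<le> n"
  shows "pairing n \<mu> (simple_root T n i) =
    (if i < n then \<mu> i - \<mu> (i + 1) else 2 * \<mu> n / (if T = TypeB then 1 else 2))"
proof (cases "i < n")
  case True
  let ?a = "\<lambda>k. evec i k - evec (i + 1) k"
  have "?a j * ?a j = 1 * evec i j + 1 * evec (i + 1) j" for j unfolding evec_def by auto
  then have "(\<Sum>j=1..n. ?a j * ?a j) = 2"
    using sum_evec[of "\<lambda>_. 1" i n] sum_evec[of "\<lambda>_. 1" "i + 1" n] assms True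
    by (simp add: sum.distrib)
  then have "coroot n ?a = ?a" unfolding coroot_def by (simp add: fun_eq_iff)
  then show ?thesis
    using True assms sum_evec[of \<mu> i n] sum_evec[of \<mu> "i + 1" n]
    unfolding pairing_def simple_root_def by (simp add: right_diff_distrib sum_subtractf)
next
  case False
  define s :: complex where "s = (if T = TypeB then 1 else 2)"
  have s: "s \<noteq> 0" unfolding s_def by simp
  have "(\<Sum>j=1..n. (s * evec n j) * (s * evec n j)) = (\<Sum>j=1..n. (s * s) * evec n j)"
    by (rule sum.cong) (auto simp: evec_def)
  also have "\<dots> = s * s" using sum_evec[of "\<lambda>_. s * s" n n] assms by simp
  finally have "(\<Sum>j=1..n. (s * evec n j) * (s * evec n j)) = s * s" .
  then have "coroot n (\<lambda>k. s * evec n k) = (\<lambda>k. (2 / s) * evec n k)"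
    unfolding coroot_def using s by (simp add: fun_eq_iff field_simps)
  then have "pairing n \<mu> (\<lambda>k. s * evec n k) = \<mu> n * (2 / s)"
    unfolding pairing_def using sum_evec[of "\<lambda>k. \<mu> k * (2 / s)" n n] assms
    by (simp add: mult.assoc)
  then show ?thesis using False assms unfolding simple_root_def s_def by simp
qed

lemma simple_root_pos:
  assumes "1 \<le> i" "i \<le> n"
  shows "simple_root T n i \<in> pos_roots T n"
proof (cases "i < n")
  case True
  then show ?thesis unfolding pos_roots_def simple_root_def
    by (intro UnI1 CollectI exI[of _ i] exI[of _ "i + 1"]) (use assms in auto)
next
  case False
  then show ?thesis unfolding pos_roots_def simple_root_def
    by (intro UnI2 CollectI exI[of _ n]) (use assms in auto)
qed

lemma pairing_pos_root_nonpos: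
  assumes "integral_weight T n \<mu>" "anti_dominant T n \<mu>" "\<alpha> \<in> pos_roots T n"
  obtains m :: int where "pairing n \<mu> \<alpha> = of_int m" "m \<le> 0"
proof -
  obtain m where m: "pairing n \<mu> \<alpha> = of_int m"
    using assms(1,3) unfolding integral_weight_def by (blast elim: Ints_cases)
  then have "\<not> m > 0" using assms(2,3) unfolding anti_dominant_def by blast
  then show ?thesis using m that by simp
qed

lemma Re_pairing_simple_root:
  assumes "k < n"
  shows "Re (pairing n \<mu> (simple_root T n (n - k))) =
    (if k = 0 \<and> T = TypeB then 2 else 1) * (weight_coord n \<mu> (int k) - weight_coord n \<mu> (int k + 1))"
  using assms pairing_simple_root[of "n - k" n \<mu> T]
  by (cases "k = 0") (auto simp: weight_coord_def Suc_diff_le nat_add_distrib)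

lemma weight_coord_step:
  assumes "integral_weight T n \<mu>" "anti_dominant T n \<mu>" "k < n"
  shows "weight_coord n \<mu> (int k) \<le> weight_coord n \<mu> (int k + 1)"
    and "weight_coord n \<mu> (int k) = weight_coord n \<mu> (int k + 1) \<Longrightarrow>
      pairing n \<mu> (simple_root T n (n - k)) = 0"
proof -
  have "simple_root T n (n - k) \<in> pos_roots T n" using assms(3) by (intro simple_root_pos) auto
  then obtain m where m: "pairing n \<mu> (simple_root T n (n - k)) = of_int m" "m \<le> 0"
    by (rule pairing_pos_root_nonpos[OF assms(1,2)])
  define r :: real where "r = (if k = 0 \<and> T = TypeB then 2 else 1)"
  have r: "r > 0" unfolding r_def by simp
  have diff: "real_of_int m = r * (weight_coord n \<mu> (int k) - weight_coord n \<mu> (int k + 1))"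
    using Re_pairing_simple_root[OF assms(3), of \<mu> T] m(1) unfolding r_def by simp
  then have "r * (weight_coord n \<mu> (int k) - weight_coord n \<mu> (int k + 1)) \<le> 0"
    using m(2) by linarith
  then show "weight_coord n \<mu> (int k) \<le> weight_coord n \<mu> (int k + 1)"
    using r by (simp add: mult_le_0_iff)
  show "pairing n \<mu> (simple_root T n (n - k)) = 0"
    if "weight_coord n \<mu> (int k) = weight_coord n \<mu> (int k + 1)"
  proof -
    have "m = 0" using diff that by simp
    then show ?thesis using m(1) by simp
  qed
qed

text \<open>Minimality of \<open>w\<close> in its coset \<open>w W\<^sub>J\<close> makes \<open>w\<close> increase along the ties of the coordinates.\<close>
lemma WJ_weight_coord_ties:
  assumes n: "1 \<le> n" and iw: "integral_weight T n \<mu>" and ad: "anti_dominant T n \<mu>"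
    and w: "w \<in> WJ T n \<mu>"
  shows "mono_on (signed_range n) (weight_coord n \<mu>)"
    and "\<And>x y. x \<in> signed_range n \<Longrightarrow> y \<in> signed_range n \<Longrightarrow> x < y \<Longrightarrow>
      weight_coord n \<mu> x = weight_coord n \<mu> y \<Longrightarrow> w x < w y"
proof -
  have sp: "signed_perm n w"
    and J: "\<And>i. i \<in> {1..n} \<Longrightarrow> pairing n \<mu> (simple_root T n i) = 0 \<Longrightarrow>
      cox_length n (w \<circ> simple_refl n i) = cox_length n w + 1"
    using w unfolding WJ_def by auto
  then have odd: "\<And>x. w (-x) = - w x" unfolding signed_perm_iff by auto
  note step = weight_coord_step[OF iw ad]
  have asc: "w (int k) < w (int k + 1)"
    if "k < n" "weight_coord n \<mu> (int k) = weight_coord n \<mu> (int k + 1)" for k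
    using cox_length_ascent[OF n sp \<open>k < n\<close>] J[of "n - k"] step(2)[OF that] that(1) by simp
  note coord = odd_chain_mono_ties[where n = n, OF weight_coord_uminus odd step(1) asc]
  have range: "signed_range n \<subseteq> {- int n..int n}" unfolding signed_range_def by auto
  show "mono_on (signed_range n) (weight_coord n \<mu>)" using mono_on_subset[OF coord(1) range] .
  show "w x < w y" if "x \<in> signed_range n" "y \<in> signed_range n" "x < y"
    "weight_coord n \<mu> x = weight_coord n \<mu> y" for x y
    using coord(2) range that by blast
qed

section \<open>The two sequences\<close>

definition signed_list :: "nat \<Rightarrow> int list" where
  "signed_list n = [- int n..-1] @ [1..int n]"

lemma set_signed_list: "set (signed_list n) = signed_range n"
  unfolding signed_list_def signed_range_def by auto

lemma sorted_signed_list: "sorted_wrt (<) (signed_list n)"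
  unfolding signed_list_def sorted_wrt_append by auto

lemma length_signed_list: "length (signed_list n) = 2 * n"
  unfolding signed_list_def by simp

lemma nth_signed_list:
  "i < 2 * n \<Longrightarrow> signed_list n ! i = (if i < n then int i - int n else int i - int n + 1)"
  unfolding signed_list_def by (auto simp: nth_append nth_upto)

lemma the_inv_into_signed_perm:
  assumes "signed_perm n w" "x \<in> signed_range n"
  shows "the_inv_into (signed_range n) w x \<in> signed_range n"
    and "w (the_inv_into (signed_range n) w x) = x"
    and "the_inv_into (signed_range n) w (-x) = - the_inv_into (signed_range n) w x"
proof -
  have bij: "bij_betw w (signed_range n) (signed_range n)" and odd: "\<forall>x. w (-x) = - w x"
    using assms(1) unfolding signed_perm_iff by auto
  show a: "the_inv_into (signed_range n) w x \<in> signed_range n"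
    using bij_betwE[OF bij_betw_the_inv_into[OF bij]] assms(2) by blast
  show b: "w (the_inv_into (signed_range n) w x) = x"
    using f_the_inv_into_f_bij_betw[OF bij] assms(2) by simp
  have "- the_inv_into (signed_range n) w x \<in> signed_range n" using a by (simp add: signed_range_def)
  moreover have "w (- the_inv_into (signed_range n) w x) = -x" using odd b by simp
  ultimately show "the_inv_into (signed_range n) w (-x) = - the_inv_into (signed_range n) w x"
    using the_inv_into_f_f[OF bij_betw_imp_inj_on[OF bij]] by metis
qed

text \<open>Only \<open>k = \<bar>w\<^sup>-\<^sup>1 m\<bar>\<close> contributes to the coordinate \<open>n + 1 - m\<close> of \<open>w \<mu>\<close>.\<close>
lemma Re_weyl_act:
  assumes sp: "signed_perm n w" and m: "1 \<le> m" "m \<le> int n"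
  shows "Re (weyl_act n w \<mu> (nat (int n + 1 - m))) =
    - weight_coord n \<mu> (the_inv_into (signed_range n) w m)"
proof -
  have bij: "bij_betw w (signed_range n) (signed_range n)" and odd: "\<forall>x. w (-x) = - w x"
    using sp unfolding signed_perm_iff by auto
  have mD: "m \<in> signed_range n" using m unfolding signed_range_def by auto
  define a where "a = the_inv_into (signed_range n) w m"
  have aD: "a \<in> signed_range n" and wa: "w a = m"
    using the_inv_into_signed_perm[OF sp mD] unfolding a_def by auto
  define k0 where "k0 = nat \<bar>a\<bar>"
  have k0: "1 \<le> k0" "k0 \<le> n" "a \<noteq> 0" using aD unfolding k0_def signed_range_def by auto
  have wk0: "w (int k0) = sgn a * m"
    using wa odd k0(3) unfolding k0_def by (cases "a > 0") (auto simp: abs_if)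
  have only_k0: "\<bar>w (int k)\<bar> = m \<longleftrightarrow> k = k0" if "k \<in> {1..n}" for k
  proof
    assume h: "\<bar>w (int k)\<bar> = m"
    have kD: "int k \<in> signed_range n" "- int k \<in> signed_range n"
      using that unfolding signed_range_def by auto
    from h consider "w (int k) = m" | "w (- int k) = m" using odd by (cases "w (int k) \<ge> 0") auto
    then have "int k = a \<or> - int k = a"
      using inj_onD[OF bij_betw_imp_inj_on[OF bij]] kD aD wa by metis
    then show "k = k0" unfolding k0_def by auto
  next
    assume "k = k0"
    then show "\<bar>w (int k)\<bar> = m" using wk0 m k0(3) by (auto simp: abs_mult abs_sgn_eq)
  qed
  have "weyl_act n w \<mu> (nat (int n + 1 - m)) =
      (\<Sum>k=1..n. if k = k0 then of_int (sgn (w (int k))) * \<mu> (n + 1 - k) else 0)"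
    unfolding weyl_act_def using m only_k0 by (intro sum.cong) auto
  also have "\<dots> = of_int (sgn (w (int k0))) * \<mu> (n + 1 - k0)"
    using k0 by simp
  also have "\<dots> = of_int (sgn a) * \<mu> (n + 1 - nat \<bar>a\<bar>)"
    using wk0 m unfolding k0_def by (simp add: sgn_mult)
  finally show ?thesis using k0(3) unfolding a_def[symmetric] weight_coord_def by simp
qed

lemma minus_vec_eq_map_signed_list:
  assumes "signed_perm n w"
  shows "minus_vec n w = map w (signed_list n)"
proof (rule nth_equalityI)
  have odd: "\<forall>x. w (-x) = - w x" using assms unfolding signed_perm_iff by auto
  show "length (minus_vec n w) = length (map w (signed_list n))"
    by (simp add: minus_vec_def length_signed_list)
  fix i assume "i < length (minus_vec n w)"
  then have i: "i < 2 * n" unfolding minus_vec_def by (simp del: upt_Suc)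
  show "minus_vec n w ! i = map w (signed_list n) ! i"
  proof (cases "i < n")
    case True
    have "minus_vec n w ! i = - w (int n - int i)"
      unfolding minus_vec_def using True by (simp add: nth_append rev_nth of_nat_diff del: upt_Suc)
    then show ?thesis
      using i True odd[rule_format, of "int n - int i"] by (simp add: nth_signed_list length_signed_list[symmetric])
  next
    case False
    have "Suc 0 + (i - n) < Suc n" using False i by simp
    then have "minus_vec n w ! i = w (int i - int n + 1)"
      unfolding minus_vec_def using False i by (simp add: nth_append of_nat_diff add.commute del: upt_Suc)
    then show ?thesis using i False by (simp add: nth_signed_list length_signed_list[symmetric])
  qed
qed

lemma Re_lam_minus_weyl_act:
  assumes sp: "signed_perm n w"
  shows "map Re (lam_minus n (weyl_act n w \<mu>)) =
    map (weight_coord n \<mu> \<circ> the_inv_into (signed_range n) w) (signed_list n)"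
proof (rule nth_equalityI)
  let ?\<tau> = "the_inv_into (signed_range n) w"
  show "length (map Re (lam_minus n (weyl_act n w \<mu>))) =
      length (map (weight_coord n \<mu> \<circ> ?\<tau>) (signed_list n))"
    by (simp add: lam_minus_def length_signed_list)
  fix i assume "i < length (map Re (lam_minus n (weyl_act n w \<mu>)))"
  then have i: "i < 2 * n" unfolding lam_minus_def by (simp del: upt_Suc)
  show "map Re (lam_minus n (weyl_act n w \<mu>)) ! i = map (weight_coord n \<mu> \<circ> ?\<tau>) (signed_list n) ! i"
  proof (cases "i < n")
    case True
    define m where "m = int n - int i"
    have m: "1 \<le> m" "m \<le> int n" using True unfolding m_def by auto
    then have mD: "m \<in> signed_range n" unfolding signed_range_def by auto
    have "map Re (lam_minus n (weyl_act n w \<mu>)) ! i = Re (weyl_act n w \<mu> (nat (int n + 1 - m)))"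
      unfolding lam_minus_def m_def using True by (simp add: nth_append nat_add_distrib del: upt_Suc)
    moreover have "map (weight_coord n \<mu> \<circ> ?\<tau>) (signed_list n) ! i = weight_coord n \<mu> (?\<tau> (- m))"
      using i True unfolding m_def by (simp add: nth_signed_list length_signed_list[symmetric])
    ultimately show ?thesis
      using Re_weyl_act[OF sp m] the_inv_into_signed_perm(3)[OF sp mD] weight_coord_uminus by simp
  next
    case False
    define m where "m = int i - int n + 1"
    have m: "1 \<le> m" "m \<le> int n" using False i unfolding m_def by auto
    have "Suc (n + n - Suc i) = nat (int n + 1 - m)" using False i unfolding m_def by simp
    then have "map Re (lam_minus n (weyl_act n w \<mu>)) ! i = - Re (weyl_act n w \<mu> (nat (int n + 1 - m)))"
      unfolding lam_minus_def using False i by (simp add: nth_append rev_nth del: upt_Suc)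
    moreover have "map (weight_coord n \<mu> \<circ> ?\<tau>) (signed_list n) ! i = weight_coord n \<mu> (?\<tau> m)"
      using i False unfolding m_def by (simp add: nth_signed_list length_signed_list[symmetric])
    ultimately show ?thesis using Re_weyl_act[OF sp m] by simp
  qed
qed

theorem mainTheorem8:
  fixes T :: rtype and n :: nat and \<mu> :: "nat \<Rightarrow> complex" and w :: "int \<Rightarrow> int"
  assumes "1 \<le> n"
    and "integral_weight T n \<mu>"
    and "anti_dominant T n \<mu>"
    and "w \<in> WJ T n \<mu>"
  shows "rs_shape (map Re (lam_minus n (weyl_act n w \<mu>))) = rs_shape (minus_vec n w)"
proof -
  have sp: "signed_perm n w" using assms(4) unfolding WJ_def by simp
  then have bij: "bij_betw w (set (signed_list n)) (set (signed_list n))"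
    unfolding signed_perm_iff set_signed_list by simp
  have inv: "\<And>x. x \<in> set (signed_list n) \<Longrightarrow> the_inv_into (signed_range n) w (w x) = x"
    using the_inv_into_f_f[OF bij_betw_imp_inj_on[OF bij]] unfolding set_signed_list .
  note ties = WJ_weight_coord_ties[OF assms, folded set_signed_list]
  have "rs_shape (map (weight_coord n \<mu> \<circ> the_inv_into (signed_range n) w) (signed_list n)) =
      rs_shape (map w (signed_list n))"
    by (rule rs_shape_map_inverse_standardize[OF sorted_signed_list bij inv ties])
  then show ?thesis unfolding Re_lam_minus_weyl_act[OF sp] minus_vec_eq_map_signed_list[OF sp] .
qed

end
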